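(* For every $n\in\mathbb N$, the set $\mathcal G_n$ of $n$-mode Gaussian states is closed in $\mathcal T(\mathcal H_n)$ with respect to the trace norm: if $\rho_G[V(k),s(k)]\in\mathcal G_n$ is a sequence and $\rho\in\mathcal T(\mathcal H_n)$ satisfies $\lim_{k\to\infty}\|\rho_G[V(k),s(k)]-\rho\|_1=0$, then $\rho\in\mathcal G_n$.
   Context: $\mathcal H_n$ is the Hilbert space of $n$ bosonic modes, with canonical operators arranged as $r=(x_1,\dots,x_n,p_1,\dots,p_n)^T$ satisfying $[r,r^T]=i\Omega$, where $\Omega=\begin{pmatrix}0&\mathbb 1_n\\-\mathbb 1_n&0\end{pmatrix}$. $\mathcal T(\mathcal H_n)$ is the Banach space of trace-class operators with trace norm $\|\cdot\|_1$. $\mathrm{QCM}_n=\{V\in M_{2n}(\mathbb R): V=V^T,\ V\ge i\Omega\}$ is the set of quantum covariance matrices (all such $V$ are positive definite). For $V\in\mathrm{QCM}_n$ and $s\in\mathbb R^{2n}$, $\rho_G[V,s]$ is the Gaussian state with displacement vector $s=\mathrm{Tr}[\rho r]$ and covariance matrix $V_{jk}=\mathrm{Tr}[\rho\{(r-s)_j,(r-s)_k\}]$; equivalently its characteristic function is $\mathrm{Tr}[\rho_G[V,s]D(\xi)]=e^{-\frac14\xi^T\Omega^TV\Omega\xi+is^T\Omega\xi}$, with $D(\xi)=e^{i\xi^T\Omega r}$. $\mathcal G_n$ denotes the set of all states $\rho_G[V,s]$. *)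

theory Defs
  imports "HOL-Analysis.Analysis"
begin

text \<open>Concrete model of the n-mode bosonic Hilbert space H_n = L^2(R^n) in the
  position (Schroedinger) representation.  The number of modes n is the
  cardinality of the finite index type 'n.  Wave functions are functions
  real^'n \<Rightarrow> complex; vectors of H_n are the square-integrable ones,
  taken up to almost-everywhere equality.\<close>

type_synonym 'n wf = "real^'n \<Rightarrow> complex"
type_synonym 'n op = "'n wf \<Rightarrow> 'n wf"

definition L2 :: "('n::finite) wf set" where
  "L2 = {\<psi>. \<psi> \<in> borel_measurable lborel \<and> integrable lborel (\<lambda>x. (cmod (\<psi> x))\<^sup>2)}"

definition ae_eq :: "('n::finite) wf \<Rightarrow> 'n wf \<Rightarrow> bool" where
  "ae_eq \<phi> \<psi> \<longleftrightarrow> (AE x in lborel. \<phi> x = \<psi> x)"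

definition ip :: "('n::finite) wf \<Rightarrow> 'n wf \<Rightarrow> complex" where
  "ip \<phi> \<psi> = (LINT x|lborel. cnj (\<phi> x) * \<psi> x)"

definition orthonormal_list :: "('n::finite) wf list \<Rightarrow> bool" where
  "orthonormal_list es \<longleftrightarrow> set es \<subseteq> L2 \<and>
     (\<forall>i<length es. \<forall>j<length es. ip (es!i) (es!j) = (if i = j then 1 else 0))"

text \<open>Trace norm: supremum over pairs of finite orthonormal families.  For a
  bounded operator this equals the sum of its singular values, and it is finite
  iff the operator is trace class.\<close>
definition tnorm :: "('n::finite) op \<Rightarrow> ennreal" where
  "tnorm T = (SUP p \<in> {(es, fs). orthonormal_list es \<and> orthonormal_list fs \<and> length es = length fs}.
      ennreal (\<Sum>i<length (fst p). cmod (ip (snd p ! i) (T (fst p ! i)))))"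

definition lin_op :: "('n::finite) op \<Rightarrow> bool" where
  "lin_op T \<longleftrightarrow>
     (\<forall>\<psi>\<in>L2. T \<psi> \<in> L2) \<and>
     (\<forall>\<phi>\<in>L2. \<forall>\<psi>\<in>L2. ae_eq \<phi> \<psi> \<longrightarrow> ae_eq (T \<phi>) (T \<psi>)) \<and>
     (\<forall>\<phi>\<in>L2. \<forall>\<psi>\<in>L2. ae_eq (T (\<lambda>x. \<phi> x + \<psi> x)) (\<lambda>x. T \<phi> x + T \<psi> x)) \<and>
     (\<forall>\<psi>\<in>L2. \<forall>c. ae_eq (T (\<lambda>x. c * \<psi> x)) (\<lambda>x. c * T \<psi> x))"

definition trace_class :: "('n::finite) op \<Rightarrow> bool" where
  "trace_class T \<longleftrightarrow> lin_op T \<and> tnorm T < \<infinity>"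

definition onb_seq :: "(nat \<Rightarrow> ('n::finite) wf) \<Rightarrow> bool" where
  "onb_seq e \<longleftrightarrow> (\<forall>k. e k \<in> L2) \<and> (\<forall>j k. ip (e j) (e k) = (if j = k then 1 else 0)) \<and>
     (\<forall>\<psi>\<in>L2. (\<forall>k. ip (e k) \<psi> = 0) \<longrightarrow> ae_eq \<psi> (\<lambda>_. 0))"

text \<open>Trace, computed in a (fixed, arbitrary) orthonormal basis of the separable
  space L^2(R^n); for trace-class operators it is basis independent.\<close>
definition trace :: "('n::finite) op \<Rightarrow> complex" where
  "trace T = (let e = (SOME e. onb_seq e) in (\<Sum>k. ip (e k) (T (e k))))"

text \<open>Phase space R^{2n} indexed by 'n + 'n: Inl j is the x_j-component, Inr j the
  p_j-component, i.e. r = (x_1..x_n,p_1..p_n).\<close>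
definition Omega :: "real^('n::finite + 'n)^('n + 'n)" where
  "Omega = (\<chi> i j. case (i, j) of
       (Inl a, Inr b) \<Rightarrow> (if a = b then 1 else 0)
     | (Inr a, Inl b) \<Rightarrow> (if a = b then -1 else 0)
     | _ \<Rightarrow> 0)"

definition QCM :: "(real^('n::finite + 'n)^('n + 'n)) set" where
  "QCM = {V. transpose V = V \<and>
     (\<forall>z :: complex^('n + 'n). 0 \<le> Re (\<Sum>j\<in>UNIV. \<Sum>k\<in>UNIV.
         cnj (z $ j) * (complex_of_real (V $ j $ k) - \<i> * complex_of_real (Omega $ j $ k)) * z $ k))}"

text \<open>Weyl displacement operator D(xi) = exp(i xi^T Omega r) with xi = (a,b),
  xi^T Omega r = a.p - b.x, in the position representation:
  (D(xi) psi)(x) = exp(-i a.b/2) exp(-i b.x) psi(x + a).\<close>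
definition disp :: "real^('n::finite + 'n) \<Rightarrow> 'n op" where
  "disp \<xi> \<psi> = (let a = (\<chi> j. \<xi> $ Inl j); b = (\<chi> j. \<xi> $ Inr j) in
     (\<lambda>x. exp (- \<i> * complex_of_real (inner a b / 2)) * exp (- \<i> * complex_of_real (inner b x))
           * \<psi> (x + a)))"

definition is_gaussian :: "real^('n::finite + 'n)^('n + 'n) \<Rightarrow> real^('n + 'n) \<Rightarrow> 'n op \<Rightarrow> bool" where
  "is_gaussian V s \<rho> \<longleftrightarrow> trace_class \<rho> \<and>
     (\<forall>\<xi>. trace (\<lambda>\<psi>. \<rho> (disp \<xi> \<psi>)) =
        exp (complex_of_real (- (1/4) * inner (Omega *v \<xi>) (V *v (Omega *v \<xi>)))
             + \<i> * complex_of_real (inner s (Omega *v \<xi>))))"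

definition Gaussian_states :: "('n::finite) op set" where
  "Gaussian_states = {\<rho>. \<exists>V s. V \<in> QCM \<and> is_gaussian V s \<rho>}"

end

theory Submission
  imports Defs
begin

text \<open>Each displacement D(\<xi>) is unitary, so |Tr[A D(\<xi>)]| \<le> \<parallel>A\<parallel>_1 and the characteristic
  functions \<chi>_k(\<xi>) = Tr[\<rho>_k D(\<xi>)] converge to Tr[\<rho> D(\<xi>)] uniformly in \<xi>. A uniform limit
  of continuous functions is continuous, so the \<chi>_k, which satisfy \<chi>_k(0) = 1, eventually stay
  within 1/2 of 1 on a common ball |\<xi>| < \<delta>. For a Gaussian characteristic function this bounds
  the quadratic form of V_k on that ball (the modulus is exp(-q/4)) and the displacement s_k
  (otherwise the phase reaches \<pi> inside the ball). A convergent subsequence of (V_k, s_k) has a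
  limit (V, s) with V in the closed set QCM, and the Gaussian formula passes to the limit.

  In this model the trace is a series over an orthonormal basis of L^2(\<real>^n), whose existence
  has to be proved: a maximal orthonormal set is complete, countable (each of its vectors fails
  to be orthogonal to the indicator of some box with rational corners, and for a fixed function
  only countably many vectors of an orthonormal set do) and infinite.\<close>

subsection \<open>Square-integrable functions\<close>

lemma borel_measurable_cnj[measurable]:
  "f \<in> borel_measurable M \<Longrightarrow> (\<lambda>x. cnj (f x)) \<in> borel_measurable M"
  by (rule borel_measurable_continuous_on[where f=cnj]) (auto intro: continuous_intros)

lemma L2_measurable[measurable_dest]: "f \<in> L2 \<Longrightarrow> f \<in> borel_measurable lborel"
  by (simp add: L2_def)

lemma L2_integrable_square: "f \<in> L2 \<Longrightarrow> integrable lborel (\<lambda>x. (cmod (f x))\<^sup>2)"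
  by (simp add: L2_def)

lemma L2I:
  "f \<in> borel_measurable lborel \<Longrightarrow> integrable lborel (\<lambda>x. (cmod (f x))\<^sup>2) \<Longrightarrow> f \<in> L2"
  by (simp add: L2_def)

lemma integrable_cnj_mult_L2:
  assumes f: "f \<in> L2" and g: "g \<in> L2"
  shows "integrable lborel (\<lambda>x. cnj (f x) * g x)"
proof (rule Bochner_Integration.integrable_bound)
  show "integrable lborel (\<lambda>x. (cmod (f x))\<^sup>2 + (cmod (g x))\<^sup>2)"
    using f g by (simp add: L2_integrable_square)
  show "(\<lambda>x. cnj (f x) * g x) \<in> borel_measurable lborel"
    using f g by measurable
  show "AE x in lborel. norm (cnj (f x) * g x) \<le> norm ((cmod (f x))\<^sup>2 + (cmod (g x))\<^sup>2)"
  proof (rule AE_I2)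
    fix x
    have "0 \<le> cmod (f x) * cmod (g x)"
      by simp
    moreover have "2 * (cmod (f x) * cmod (g x)) \<le> (cmod (f x))\<^sup>2 + (cmod (g x))\<^sup>2"
      using sum_squares_bound[of "cmod (f x)" "cmod (g x)"] by (simp add: mult.assoc)
    ultimately have "cmod (f x) * cmod (g x) \<le> (cmod (f x))\<^sup>2 + (cmod (g x))\<^sup>2"
      by linarith
    then show "norm (cnj (f x) * g x) \<le> norm ((cmod (f x))\<^sup>2 + (cmod (g x))\<^sup>2)"
      by (simp add: norm_mult)
  qed
qed

lemma L2_add:
  assumes f: "f \<in> L2" and g: "g \<in> L2"
  shows "(\<lambda>x. f x + g x) \<in> L2"
proof (rule L2I)
  show "(\<lambda>x. f x + g x) \<in> borel_measurable lborel"
    using f g by measurable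
  show "integrable lborel (\<lambda>x. (cmod (f x + g x))\<^sup>2)"
  proof (rule Bochner_Integration.integrable_bound)
    show "integrable lborel (\<lambda>x. 2 * (cmod (f x))\<^sup>2 + 2 * (cmod (g x))\<^sup>2)"
      using f g by (simp add: L2_integrable_square)
    show "(\<lambda>x. (cmod (f x + g x))\<^sup>2) \<in> borel_measurable lborel"
      using f g by measurable
    show "AE x in lborel. norm ((cmod (f x + g x))\<^sup>2) \<le> norm (2 * (cmod (f x))\<^sup>2 + 2 * (cmod (g x))\<^sup>2)"
    proof (rule AE_I2)
      fix x
      have "(cmod (f x + g x))\<^sup>2 \<le> (cmod (f x) + cmod (g x))\<^sup>2"
        by (intro power_mono norm_triangle_ineq) simp
      also have "\<dots> \<le> 2 * (cmod (f x))\<^sup>2 + 2 * (cmod (g x))\<^sup>2"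
        using sum_squares_bound[of "cmod (f x)" "cmod (g x)"] by (simp add: power2_sum)
      finally show "norm ((cmod (f x + g x))\<^sup>2) \<le> norm (2 * (cmod (f x))\<^sup>2 + 2 * (cmod (g x))\<^sup>2)"
        by simp
    qed
  qed
qed

lemma L2_scale:
  assumes f: "f \<in> L2"
  shows "(\<lambda>x. c * f x) \<in> L2"
proof (rule L2I)
  show "(\<lambda>x. c * f x) \<in> borel_measurable lborel"
    using f by measurable
  show "integrable lborel (\<lambda>x. (cmod (c * f x))\<^sup>2)"
    using L2_integrable_square[OF f] by (simp add: norm_mult power_mult_distrib)
qed

lemma L2_diff: "f \<in> L2 \<Longrightarrow> g \<in> L2 \<Longrightarrow> (\<lambda>x. f x - g x) \<in> L2"
  using L2_add[OF _ L2_scale, of f g "-1"] by simp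

lemma L2_sum: "finite F \<Longrightarrow> F \<subseteq> L2 \<Longrightarrow> (\<lambda>x. \<Sum>e\<in>F. c e * e x) \<in> L2"
proof (induction F rule: finite_induct)
  case empty
  show ?case by (rule L2I) simp_all
next
  case (insert a F)
  then show ?case using L2_add[OF L2_scale[of a "c a"]] by simp
qed

lemma L2_indicator:
  assumes "A \<in> sets borel" "bounded A"
  shows "(\<lambda>x. indicator A x :: complex) \<in> L2"
proof (rule L2I)
  show "(\<lambda>x. indicator A x :: complex) \<in> borel_measurable lborel"
    using assms(1) by measurable
  have "integrable lborel (indicator A :: _ \<Rightarrow> real)"
    using assms emeasure_bounded_finite[OF assms(2)] by (intro integrable_real_indicator) auto
  then show "integrable lborel (\<lambda>x. (cmod (indicator A x :: complex))\<^sup>2)"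
    by (rule back_subst[of "integrable lborel"]) (auto split: split_indicator)
qed

lemma ip_scale_left: "ip (\<lambda>x. c * f x) g = cnj c * ip f g"
  unfolding ip_def by (simp add: mult.assoc)

lemma ip_scale_right: "ip f (\<lambda>x. c * g x) = c * ip f g"
  unfolding ip_def by (simp add: mult.left_commute)

lemma ip_diff_right:
  "f \<in> L2 \<Longrightarrow> g \<in> L2 \<Longrightarrow> h \<in> L2 \<Longrightarrow> ip f (\<lambda>x. g x - h x) = ip f g - ip f h"
  unfolding ip_def
  by (simp add: right_diff_distrib Bochner_Integration.integral_diff integrable_cnj_mult_L2)

lemma ip_sum_right:
  assumes "finite F" "F \<subseteq> L2" "f \<in> L2"
  shows "ip f (\<lambda>x. \<Sum>e\<in>F. c e * e x) = (\<Sum>e\<in>F. c e * ip f e)"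
proof -
  have "ip f (\<lambda>x. \<Sum>e\<in>F. c e * e x) = (LINT x|lborel. (\<Sum>e\<in>F. c e * (cnj (f x) * e x)))"
    unfolding ip_def by (simp add: sum_distrib_left mult.left_commute)
  also have "\<dots> = (\<Sum>e\<in>F. c e * ip f e)"
    unfolding ip_def using assms
    by (subst Bochner_Integration.integral_sum) (auto intro!: integrable_cnj_mult_L2)
  finally show ?thesis .
qed

lemma ip_cnj: "ip g f = cnj (ip f g)"
proof -
  have "ip g f = (LINT x|lborel. cnj (cnj (f x) * g x))"
    unfolding ip_def by (rule Bochner_Integration.integral_cong) (simp_all add: mult.commute)
  also have "\<dots> = cnj (LINT x|lborel. cnj (f x) * g x)"
    by (rule Bochner_Integration.integral_cnj)
  also have "\<dots> = cnj (ip f g)"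
    by (simp only: ip_def)
  finally show ?thesis .
qed

lemma ip_self: "ip f f = of_real (LINT x|lborel. (cmod (f x))\<^sup>2)"
proof -
  have *: "\<And>x. cnj (f x) * f x = of_real ((cmod (f x))\<^sup>2)"
    by (subst complex_norm_square) (simp add: mult.commute)
  have "ip f f = (LINT x|lborel. complex_of_real ((cmod (f x))\<^sup>2))"
    unfolding ip_def by (simp only: *)
  then show ?thesis
    by (simp only: integral_complex_of_real)
qed

lemma ip_self_nonneg: "0 \<le> Re (ip f f)"
  by (simp add: ip_self)

lemma Im_ip_self: "Im (ip f f) = 0"
  by (simp add: ip_self)

lemma ip_self_eq_0_imp_AE_zero:
  assumes f: "f \<in> L2" and "ip f f = 0"
  shows "AE x in lborel. f x = 0"
proof -
  have "(LINT x|lborel. (cmod (f x))\<^sup>2) = 0"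
    using assms(2) by (simp add: ip_self)
  then have "AE x in lborel. (cmod (f x))\<^sup>2 = 0"
    using integral_nonneg_eq_0_iff_AE[of lborel "\<lambda>x. (cmod (f x))\<^sup>2"] L2_integrable_square[OF f]
    by auto
  then show ?thesis by simp
qed

lemma ip_AE_zero_left:
  assumes "AE x in lborel. f x = 0"
  shows "ip f g = 0"
proof -
  have "AE x in lborel. cnj (f x) * g x = 0"
    using assms by auto
  then show ?thesis
    unfolding ip_def by (rule integral_eq_zero_AE)
qed

definition orthonormal_set :: "('n::finite) wf set \<Rightarrow> bool" where
  "orthonormal_set E \<longleftrightarrow> E \<subseteq> L2 \<and> (\<forall>e\<in>E. ip e e = 1) \<and> (\<forall>e\<in>E. \<forall>e'\<in>E. e \<noteq> e' \<longrightarrow> ip e e' = 0)"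

definition total_set :: "('n::finite) wf set \<Rightarrow> bool" where
  "total_set M \<longleftrightarrow> (\<forall>\<psi>\<in>L2. (\<forall>e\<in>M. ip e \<psi> = 0) \<longrightarrow> (AE x in lborel. \<psi> x = 0))"

lemma orthonormal_set_L2: "orthonormal_set M \<Longrightarrow> e \<in> M \<Longrightarrow> e \<in> L2"
  unfolding orthonormal_set_def by (simp add: subset_iff)

lemma orthonormal_set_subset: "orthonormal_set M \<Longrightarrow> F \<subseteq> M \<Longrightarrow> orthonormal_set F"
  unfolding orthonormal_set_def by (simp add: subset_iff)

lemma orthonormal_set_ip:
  "orthonormal_set M \<Longrightarrow> e \<in> M \<Longrightarrow> e' \<in> M \<Longrightarrow> ip e e' = (if e = e' then 1 else 0)"
  unfolding orthonormal_set_def by auto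

lemma ip_orthonormal_residual:
  assumes E: "finite E" "orthonormal_set E" and \<psi>: "\<psi> \<in> L2" and e': "e' \<in> E"
  shows "ip e' (\<lambda>x. \<psi> x - (\<Sum>e\<in>E. ip e \<psi> * e x)) = 0"
proof -
  have L2: "E \<subseteq> L2" and e'_L2: "e' \<in> L2"
    using E(2) e' by (auto simp: orthonormal_set_def)
  have "ip e' (\<lambda>x. \<psi> x - (\<Sum>e\<in>E. ip e \<psi> * e x)) = ip e' \<psi> - (\<Sum>e\<in>E. ip e \<psi> * ip e' e)"
    using ip_diff_right[OF e'_L2 \<psi> L2_sum[OF E(1) L2]] ip_sum_right[OF E(1) L2 e'_L2] by simp
  also have "(\<Sum>e\<in>E. ip e \<psi> * ip e' e) = (\<Sum>e\<in>E. if e = e' then ip e' \<psi> else 0)"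
    using orthonormal_set_ip[OF E(2) e'] by (intro sum.cong) auto
  finally show ?thesis using E(1) e' by simp
qed

lemma ip_self_orthonormal_residual:
  assumes E: "finite E" "orthonormal_set E" and \<psi>: "\<psi> \<in> L2"
  defines "\<phi> \<equiv> \<lambda>x. \<psi> x - (\<Sum>e\<in>E. ip e \<psi> * e x)"
  shows "ip \<phi> \<phi> = ip \<psi> \<psi> - of_real (\<Sum>e\<in>E. (cmod (ip e \<psi>))\<^sup>2)"
proof -
  have L2: "E \<subseteq> L2" using E(2) by (simp add: orthonormal_set_def)
  have S: "(\<lambda>x. \<Sum>e\<in>E. ip e \<psi> * e x) \<in> L2" by (rule L2_sum[OF E(1) L2])
  have \<phi>: "\<phi> \<in> L2" unfolding \<phi>_def by (rule L2_diff[OF \<psi> S])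
  have orth: "ip e \<phi> = 0" if "e \<in> E" for e
    unfolding \<phi>_def using ip_orthonormal_residual[OF E \<psi> that] .
  have "ip \<phi> \<phi> = ip \<phi> (\<lambda>x. \<psi> x - (\<Sum>e\<in>E. ip e \<psi> * e x))"
    by (simp only: \<phi>_def)
  also have "\<dots> = ip \<phi> \<psi> - (\<Sum>e\<in>E. ip e \<psi> * ip \<phi> e)"
    using ip_diff_right[OF \<phi> \<psi> S] ip_sum_right[OF E(1) L2 \<phi>] by simp
  also have "(\<Sum>e\<in>E. ip e \<psi> * ip \<phi> e) = 0"
    using orth by (simp add: ip_cnj[of \<phi>])
  finally have "ip \<phi> \<phi> = cnj (ip \<psi> \<phi>)"
    by (simp add: ip_cnj[of \<phi> \<psi>])
  also have "ip \<psi> \<phi> = ip \<psi> \<psi> - (\<Sum>e\<in>E. ip e \<psi> * ip \<psi> e)"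
    unfolding \<phi>_def using ip_diff_right[OF \<psi> \<psi> S] ip_sum_right[OF E(1) L2 \<psi>] by simp
  also have "(\<Sum>e\<in>E. ip e \<psi> * ip \<psi> e) = of_real (\<Sum>e\<in>E. (cmod (ip e \<psi>))\<^sup>2)"
    by (simp add: ip_cnj[of \<psi>] complex_norm_square del: of_real_power)
  finally show ?thesis
    using Im_ip_self[of \<psi>] by (simp add: complex_eq_iff)
qed

lemma bessel_inequality:
  assumes "finite E" "orthonormal_set E" "\<psi> \<in> L2"
  shows "(\<Sum>e\<in>E. (cmod (ip e \<psi>))\<^sup>2) \<le> Re (ip \<psi> \<psi>)"
  using ip_self_orthonormal_residual[OF assms] ip_self_nonneg[of "\<lambda>x. \<psi> x - (\<Sum>e\<in>E. ip e \<psi> * e x)"]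
  by simp

subsection \<open>Boxes with rational corners\<close>

definition rational_points :: "'a::euclidean_space set" where
  "rational_points = {x. \<forall>i\<in>Basis. x \<bullet> i \<in> \<rat>}"

definition rational_boxes :: "'a::euclidean_space set set" where
  "rational_boxes = (\<lambda>(a, b). box a b) ` (rational_points \<times> rational_points)"

lemma inner_sum_Basis_scaleR: "i \<in> Basis \<Longrightarrow> (\<Sum>j\<in>Basis. f j *\<^sub>R j) \<bullet> i = f i"
  for i :: "'a::euclidean_space"
  by (simp add: inner_sum_left inner_Basis if_distrib cong: if_cong)

lemma inner_One_Basis: "i \<in> Basis \<Longrightarrow> One \<bullet> i = (1::real)"
  using inner_sum_Basis_scaleR[of i "\<lambda>_. 1"] by simp

lemma scaleR_One_rational_point: "r \<in> \<rat> \<Longrightarrow> r *\<^sub>R One \<in> rational_points"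
  by (simp add: rational_points_def inner_One_Basis)

lemma countable_rational_points: "countable (rational_points :: 'a::euclidean_space set)"
proof -
  have "(rational_points :: 'a set) \<subseteq> (\<lambda>f. \<Sum>j\<in>Basis. f j *\<^sub>R j) ` (Basis \<rightarrow>\<^sub>E \<rat>)"
  proof
    fix x :: 'a
    assume x: "x \<in> rational_points"
    have "x = (\<Sum>j\<in>Basis. restrict (\<lambda>i. x \<bullet> i) Basis j *\<^sub>R j)"
      by (simp add: euclidean_representation)
    moreover have "restrict (\<lambda>i. x \<bullet> i) Basis \<in> Basis \<rightarrow>\<^sub>E \<rat>"
      using x by (auto simp: rational_points_def)
    ultimately show "x \<in> (\<lambda>f. \<Sum>j\<in>Basis. f j *\<^sub>R j) ` (Basis \<rightarrow>\<^sub>E \<rat>)"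
      by blast
  qed
  moreover have "countable ((\<lambda>f. \<Sum>j\<in>Basis. f j *\<^sub>R (j::'a)) ` (Basis \<rightarrow>\<^sub>E \<rat>))"
    by (intro countable_image countable_PiE) (auto intro: countable_rat)
  ultimately show ?thesis
    by (rule countable_subset)
qed

lemma countable_rational_boxes: "countable (rational_boxes :: 'a::euclidean_space set set)"
  unfolding rational_boxes_def by (intro countable_image countable_SIGMA countable_rational_points)

lemma rational_box_sets: "A \<in> rational_boxes \<Longrightarrow> A \<in> sets borel"
  and rational_box_bounded: "A \<in> rational_boxes \<Longrightarrow> bounded A"
  by (auto simp: rational_boxes_def)

lemma Int_stable_rational_boxes: "Int_stable (rational_boxes :: 'a::euclidean_space set set)"
proof (rule Int_stableI)
  fix A B :: "'a set"
  assume "A \<in> rational_boxes" "B \<in> rational_boxes"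
  then obtain a b c d where abcd: "a \<in> rational_points" "b \<in> rational_points"
    "c \<in> rational_points" "d \<in> rational_points" "A = box a b" "B = box c d"
    by (auto simp: rational_boxes_def)
  have "(\<Sum>i\<in>Basis. max (a \<bullet> i) (c \<bullet> i) *\<^sub>R i) \<in> rational_points"
    "(\<Sum>i\<in>Basis. min (b \<bullet> i) (d \<bullet> i) *\<^sub>R i) \<in> rational_points"
    using abcd by (auto simp: rational_points_def inner_sum_Basis_scaleR max_def min_def)
  then show "A \<inter> B \<in> rational_boxes"
    unfolding abcd box_Int_box rational_boxes_def by auto
qed

lemma sets_borel_eq_sigma_rational_boxes:
  "sets (borel :: 'a::euclidean_space measure) = sigma_sets UNIV rational_boxes"
proof -
  have "borel = sigma UNIV (rational_boxes :: 'a set set)"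
    unfolding rational_boxes_def
  proof (rule borel_eq_sigmaI1[OF borel_def])
    fix M :: "'a set"
    assume "M \<in> {S. open S}"
    then have "open M" by simp
    define a' where "a' \<equiv> \<lambda>f :: 'a \<Rightarrow> real \<times> real. (\<Sum>(i::'a)\<in>Basis. fst (f i) *\<^sub>R i)"
    define b' where "b' \<equiv> \<lambda>f :: 'a \<Rightarrow> real \<times> real. (\<Sum>(i::'a)\<in>Basis. snd (f i) *\<^sub>R i)"
    define I where "I \<equiv> {f\<in>Basis \<rightarrow>\<^sub>E \<rat> \<times> \<rat>. box (a' f) (b' f) \<subseteq> M}"
    have M: "M = (\<Union>f\<in>I. box (a' f) (b' f))"
      unfolding a'_def b'_def I_def by (rule open_UNION_box[OF \<open>open M\<close>])
    have "countable I"
      unfolding I_def by (rule countable_subset[of _ "Basis \<rightarrow>\<^sub>E \<rat> \<times> \<rat>"])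
        (auto intro!: countable_PiE countable_rat)
    moreover have "box (a' f) (b' f) \<in> (\<lambda>(a, b). box a b) ` (rational_points \<times> rational_points)"
      if "f \<in> I" for f
    proof -
      have "a' f \<in> rational_points" "b' f \<in> rational_points"
        using that by (auto simp: rational_points_def a'_def b'_def I_def inner_sum_Basis_scaleR
            PiE_iff mem_Times_iff)
      then show ?thesis by auto
    qed
    ultimately show "M \<in> sets (sigma UNIV ((\<lambda>(a, b). box a b) ` (rational_points \<times> rational_points)))"
      by (subst M) (intro sets.countable_UN'; auto)
  qed auto
  then have "sets (borel :: 'a measure) = sets (sigma UNIV rational_boxes)"
    by simp
  also have "\<dots> = sigma_sets UNIV rational_boxes"
    by (rule sets_measure_of) simp
  finally show ?thesis .
qed

lemma integral_indicator_zero_on_sigma_sets: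
  fixes g :: "'a \<Rightarrow> 'b::{banach, second_countable_topology}"
  assumes G: "Int_stable G" "G \<subseteq> Pow (space M)" "sets M = sigma_sets (space M) G"
    and g: "integrable M g" "(LINT x|M. g x) = 0"
    and zero: "\<And>A. A \<in> G \<Longrightarrow> (LINT x|M. indicator A x *\<^sub>R g x) = 0"
    and A: "A \<in> sets M"
  shows "(LINT x|M. indicator A x *\<^sub>R g x) = 0"
proof -
  have "A \<in> sigma_sets (space M) G"
    using A G(3) by simp
  with G(1,2) show ?thesis
  proof (induction rule: sigma_sets_induct_disjoint)
    case (basic A)
    then show ?case by (rule zero)
  next
    case empty
    show ?case by simp
  next
    case (compl A)
    then have A: "A \<in> sets M"
      using G(3) by simp
    have "(LINT x|M. indicator (space M - A) x *\<^sub>R g x) = (LINT x|M. g x - indicator A x *\<^sub>R g x)"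
      by (intro Bochner_Integration.integral_cong) (auto split: split_indicator)
    also have "\<dots> = (LINT x|M. g x) - (LINT x|M. indicator A x *\<^sub>R g x)"
      by (intro Bochner_Integration.integral_diff g integrable_mult_indicator A)
    finally show ?case
      using compl(2) g(2) by simp
  next
    case (union A)
    then have A: "A i \<in> sets M" for i
      using G(3) by auto
    have "(LINT x:(\<Union>i. A i)|M. g x) = (\<Sum>i. (LINT x:(A i)|M. g x))"
    proof (rule lebesgue_integral_countable_add[OF A])
      show "A i \<inter> A j = {}" if "i \<noteq> j" for i j
        using union(1) that by (auto simp: disjoint_family_on_def)
      show "set_integrable M (\<Union>i. A i) g"
        unfolding set_integrable_def using A by (intro integrable_mult_indicator g) auto
    qed
    then show ?case
      using union(3) by (simp add: set_lebesgue_integral_def)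
  qed
qed

text \<open>The support condition gives \<integral>g = 0, which the complement step of the Dynkin
  argument needs.\<close>

lemma AE_zero_if_rational_box_integrals_zero:
  fixes g :: "'a::euclidean_space \<Rightarrow> 'b::{banach, second_countable_topology}"
  assumes g: "integrable lborel g"
    and C: "C \<in> rational_boxes" and supp: "\<And>x. x \<notin> C \<Longrightarrow> g x = 0"
    and boxes: "\<And>A. A \<in> rational_boxes \<Longrightarrow> (LINT x|lborel. indicator A x *\<^sub>R g x) = 0"
  shows "AE x in lborel. g x = 0"
proof (rule sigma_finite_measure.density_zero[OF sigma_finite_lborel g])
  have "(LINT x|lborel. g x) = (LINT x|lborel. indicator C x *\<^sub>R g x)"
    using supp by (intro Bochner_Integration.integral_cong) (auto split: split_indicator)
  then have g0: "(LINT x|lborel. g x) = 0"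
    using boxes[OF C] by simp
  show "set_lebesgue_integral lborel A g = 0" if "A \<in> sets lborel" for A
    unfolding set_lebesgue_integral_def
    by (rule integral_indicator_zero_on_sigma_sets[OF Int_stable_rational_boxes _ _ g g0 boxes that])
      (simp_all add: sets_borel_eq_sigma_rational_boxes)
qed

lemma ip_indicator_left: "ip (\<lambda>x. indicator A x) f = (LINT x|lborel. indicator A x *\<^sub>R f x)"
  unfolding ip_def by (intro Bochner_Integration.integral_cong) (auto split: split_indicator)

lemma L2_AE_zero_if_orthogonal_rational_boxes:
  fixes f :: "('n::finite) wf"
  assumes f: "f \<in> L2" and orth: "\<And>A. A \<in> rational_boxes \<Longrightarrow> ip (\<lambda>x. indicator A x) f = 0"
  shows "AE x in lborel. f x = 0"
proof -
  define C where "C m = box (- (real m *\<^sub>R One)) (real m *\<^sub>R One :: real^'n)" for m :: nat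
  have C: "C m \<in> rational_boxes" for m
    unfolding C_def rational_boxes_def
    using scaleR_One_rational_point[of "- real m"] scaleR_One_rational_point[of "real m"] by auto
  have "AE x in lborel. indicator (C m) x *\<^sub>R f x = 0" for m
  proof (rule AE_zero_if_rational_box_integrals_zero[OF _ C[of m]])
    have "integrable lborel (\<lambda>x. cnj (indicator (C m) x) * f x)"
      using L2_indicator[OF rational_box_sets[OF C] rational_box_bounded[OF C]] f
      by (rule integrable_cnj_mult_L2)
    then show "integrable lborel (\<lambda>x. indicator (C m) x *\<^sub>R f x)"
      by (rule back_subst[of "integrable lborel"]) (auto split: split_indicator)
    fix A :: "(real^'n) set"
    assume "A \<in> rational_boxes"
    then have "A \<inter> C m \<in> rational_boxes"
      using Int_stable_rational_boxes C by (auto simp: Int_stable_def)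
    then have "(LINT x|lborel. indicator (A \<inter> C m) x *\<^sub>R f x) = 0"
      using orth by (simp only: ip_indicator_left)
    then show "(LINT x|lborel. indicator A x *\<^sub>R (indicator (C m) x *\<^sub>R f x)) = 0"
      by (simp add: ip_indicator_left indicator_inter_arith)
  qed simp
  then have "AE x in lborel. \<forall>m. indicator (C m) x *\<^sub>R f x = 0"
    unfolding AE_all_countable by blast
  moreover have "\<exists>m. x \<in> C m" for x
    using UN_box_eq_UNIV unfolding C_def by blast
  ultimately show ?thesis
    by (elim eventually_mono) (metis indicator_simps(1) scaleR_one)
qed

subsection \<open>Existence of an orthonormal basis\<close>

lemma finite_orthonormal_large_coeffs:
  assumes M: "orthonormal_set M" and t: "t \<in> L2" and r: "0 < r"
  shows "finite {e\<in>M. r < cmod (ip e t)}"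
proof (rule ccontr)
  assume "infinite {e\<in>M. r < cmod (ip e t)}"
  moreover obtain N :: nat where N: "Re (ip t t) / r\<^sup>2 < real N"
    using reals_Archimedean2 by blast
  ultimately obtain F where F: "finite F" "card F = N" "F \<subseteq> {e\<in>M. r < cmod (ip e t)}"
    using infinite_arbitrarily_large by blast
  have "real N * r\<^sup>2 = (\<Sum>e\<in>F. r\<^sup>2)"
    using F(2) by simp
  also have "\<dots> \<le> (\<Sum>e\<in>F. (cmod (ip e t))\<^sup>2)"
    using F(3) r by (intro sum_mono power_mono) auto
  also have "\<dots> \<le> Re (ip t t)"
    using F M t by (intro bessel_inequality orthonormal_set_subset[OF M]) auto
  finally show False
    using N r by (simp add: divide_less_eq)
qed

lemma countable_orthonormal_nonorthogonal:
  assumes M: "orthonormal_set M" and t: "t \<in> L2"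
  shows "countable {e\<in>M. ip e t \<noteq> 0}"
proof (rule countable_subset)
  show "{e\<in>M. ip e t \<noteq> 0} \<subseteq> (\<Union>n. {e\<in>M. inverse (real (Suc n)) < cmod (ip e t)})"
  proof
    fix e
    assume "e \<in> {e\<in>M. ip e t \<noteq> 0}"
    then have "e \<in> M" "0 < cmod (ip e t)"
      by auto
    moreover from this(2) obtain n where "inverse (real (Suc n)) < cmod (ip e t)"
      using reals_Archimedean by blast
    ultimately show "e \<in> (\<Union>n. {e\<in>M. inverse (real (Suc n)) < cmod (ip e t)})"
      by blast
  qed
  show "countable (\<Union>n. {e\<in>M. inverse (real (Suc n)) < cmod (ip e t)})"
    by (intro countable_UN[OF countableI_type] countable_finite
        finite_orthonormal_large_coeffs[OF M t]) auto
qed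

lemma countable_orthonormal_set:
  fixes M :: "('n::finite) wf set"
  assumes M: "orthonormal_set M"
  shows "countable M"
proof (rule countable_subset)
  define T where "T = (\<lambda>A. (\<lambda>x. indicator A x :: complex)) ` (rational_boxes :: (real^'n) set set)"
  show "countable (\<Union>t\<in>T. {e\<in>M. ip e t \<noteq> 0})"
    unfolding T_def
    by (intro countable_UN countable_image countable_rational_boxes
        countable_orthonormal_nonorthogonal[OF M])
      (auto intro!: L2_indicator rational_box_sets rational_box_bounded)
  show "M \<subseteq> (\<Union>t\<in>T. {e\<in>M. ip e t \<noteq> 0})"
  proof
    fix e
    assume e: "e \<in> M"
    show "e \<in> (\<Union>t\<in>T. {e\<in>M. ip e t \<noteq> 0})"
    proof (rule ccontr)
      assume "e \<notin> (\<Union>t\<in>T. {e\<in>M. ip e t \<noteq> 0})"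
      then have "ip (\<lambda>x. indicator A x) e = 0" if "A \<in> rational_boxes" for A
        using e that by (auto simp: T_def ip_cnj[of "\<lambda>x. indicator A x"])
      then have "AE x in lborel. e x = 0"
        by (rule L2_AE_zero_if_orthogonal_rational_boxes[OF orthonormal_set_L2[OF M e]])
      then have "ip e e = 0"
        by (rule ip_AE_zero_left)
      then show False
        using M e by (simp add: orthonormal_set_def)
    qed
  qed
qed

lemma parseval_finite_total:
  assumes M: "finite M" "orthonormal_set M" "total_set M" and \<psi>: "\<psi> \<in> L2"
  shows "(\<Sum>e\<in>M. (cmod (ip e \<psi>))\<^sup>2) = Re (ip \<psi> \<psi>)"
proof -
  define \<phi> where "\<phi> = (\<lambda>x. \<psi> x - (\<Sum>e\<in>M. ip e \<psi> * e x))"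
  have "\<phi> \<in> L2"
    unfolding \<phi>_def using M by (intro L2_diff \<psi> L2_sum) (auto simp: orthonormal_set_def)
  moreover have "\<forall>e\<in>M. ip e \<phi> = 0"
    unfolding \<phi>_def using ip_orthonormal_residual[OF M(1,2) \<psi>] by blast
  ultimately have "ip \<phi> \<phi> = 0"
    using M(3) ip_AE_zero_left by (auto simp: total_set_def)
  then show ?thesis
    using ip_self_orthonormal_residual[OF M(1,2) \<psi>] unfolding \<phi>_def by simp
qed

lemma ip_indicator_indicator:
  assumes "A \<in> sets borel" "B \<in> sets borel"
  shows "ip (\<lambda>x. indicator A x) (\<lambda>x. indicator B x) = complex_of_real (measure lborel (A \<inter> B))"
proof -
  have "ip (\<lambda>x. indicator A x) (\<lambda>x. indicator B x) = (LINT x|lborel. complex_of_real (indicator (A \<inter> B) x))"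
    unfolding ip_def by (intro Bochner_Integration.integral_cong) (auto split: split_indicator)
  then show ?thesis
    using assms by simp
qed

lemma ex_orthonormal_seq:
  "\<exists>f :: nat \<Rightarrow> ('n::finite) wf. (\<forall>i. f i \<in> L2) \<and> (\<forall>i j. ip (f i) (f j) = (if i = j then 1 else 0))"
proof -
  define B where "B i = box (real i *\<^sub>R One) ((real i + 1) *\<^sub>R One :: real^'n)" for i :: nat
  obtain b :: "real^'n" where b: "b \<in> Basis"
    using nonempty_Basis by blast
  have B_disjoint: "B i \<inter> B j = {}" if "i \<noteq> j" for i j
  proof -
    have "x \<notin> B i \<inter> B j" for x
    proof
      assume "x \<in> B i \<inter> B j"
      then have "real i < x \<bullet> b" "x \<bullet> b < real i + 1" "real j < x \<bullet> b" "x \<bullet> b < real j + 1"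
        using b by (auto simp: B_def mem_box inner_One_Basis)
      then have "i < j + 1" "j < i + 1"
        by linarith+
      then show False
        using that by linarith
    qed
    then show ?thesis
      by blast
  qed
  have "measure lborel (B i) = 1" for i
    by (simp add: B_def measure_lborel_box_eq inner_One_Basis inner_diff_left)
  then have "ip (\<lambda>x. indicator (B i) x) (\<lambda>x. indicator (B j) x) = (if i = j then 1 else 0)" for i j
    using ip_indicator_indicator[of "B i" "B j"] B_disjoint[of i j] by (simp add: B_def)
  moreover have "(\<lambda>x. indicator (B i) x :: complex) \<in> L2" for i
    unfolding B_def by (intro L2_indicator) auto
  ultimately show ?thesis
    by (intro exI[of _ "\<lambda>i x. indicator (B i) x"]) simp
qed

text \<open>Bessel's inequality for N + 1 orthonormal functions against a total orthonormal set of N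
  elements contradicts Parseval.\<close>

lemma infinite_total_orthonormal_set:
  fixes M :: "('n::finite) wf set"
  assumes M: "orthonormal_set M" "total_set M"
  shows "infinite M"
proof
  assume fin: "finite M"
  define N where "N = card M"
  obtain f :: "nat \<Rightarrow> 'n wf" where f_L2: "\<And>i. f i \<in> L2"
    and ip_f: "\<And>i j. ip (f i) (f j) = (if i = j then 1 else 0)"
    using ex_orthonormal_seq by blast
  have inj: "inj_on f {..N}"
  proof (rule inj_onI)
    fix i j
    assume "f i = f j"
    then show "i = j"
      using ip_f[of i i] ip_f[of i j] by (cases "i = j") auto
  qed
  have "real (N + 1) = (\<Sum>i\<in>{..N}. \<Sum>e\<in>M. (cmod (ip e (f i)))\<^sup>2)"
    using parseval_finite_total[OF fin M f_L2] ip_f by simp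
  also have "\<dots> = (\<Sum>e\<in>M. \<Sum>t\<in>f ` {..N}. (cmod (ip t e))\<^sup>2)"
    by (subst sum.swap) (simp add: sum.reindex[OF inj] ip_cnj[of _ "f _"])
  also have "\<dots> \<le> (\<Sum>e\<in>M. Re (ip e e))"
    using f_L2 ip_f
    by (intro sum_mono bessel_inequality orthonormal_set_L2[OF M(1)])
      (auto simp: orthonormal_set_def)
  also have "\<dots> = real N"
    using M(1) by (simp add: N_def orthonormal_set_def)
  finally show False
    by simp
qed

lemma maximal_orthonormal_set_total:
  assumes M: "orthonormal_set M" and max: "\<And>X. orthonormal_set X \<Longrightarrow> M \<subseteq> X \<Longrightarrow> X = M"
  shows "total_set M"
  unfolding total_set_def
proof (intro ballI impI)
  fix \<psi> :: "'a wf"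
  assume \<psi>: "\<psi> \<in> L2" and orth: "\<forall>e\<in>M. ip e \<psi> = 0"
  show "AE x in lborel. \<psi> x = 0"
  proof (rule ccontr)
    assume "\<not> (AE x in lborel. \<psi> x = 0)"
    then have "ip \<psi> \<psi> \<noteq> 0"
      using ip_self_eq_0_imp_AE_zero[OF \<psi>] by blast
    then have r: "0 < Re (ip \<psi> \<psi>)"
      using ip_self_nonneg[of \<psi>] Im_ip_self[of \<psi>] by (auto simp: complex_eq_iff)
    define c where "c = 1 / sqrt (Re (ip \<psi> \<psi>))"
    define \<psi>' where "\<psi>' = (\<lambda>x. complex_of_real c * \<psi> x)"
    have "ip \<psi>' \<psi>' = complex_of_real (c * c * Re (ip \<psi> \<psi>))"
      unfolding \<psi>'_def ip_scale_left ip_scale_right using Im_ip_self[of \<psi>]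
      by (simp add: complex_eq_iff)
    also have "c * c * Re (ip \<psi> \<psi>) = 1"
      using r by (simp add: c_def real_sqrt_mult_self)
    finally have norm1: "ip \<psi>' \<psi>' = 1"
      by simp
    have orth1: "ip e \<psi>' = 0" if "e \<in> M" for e
      using orth that by (simp add: \<psi>'_def ip_scale_right)
    have orth2: "ip \<psi>' e = 0" if "e \<in> M" for e
      using orth1[OF that] by (simp add: ip_cnj[of \<psi>'])
    have "orthonormal_set (insert \<psi>' M)"
      using M L2_scale[OF \<psi>] norm1 orth1 orth2 by (auto simp: orthonormal_set_def \<psi>'_def)
    moreover have "\<psi>' \<notin> M"
      using orth1 norm1 by force
    ultimately show False
      using max by blast
  qed
qed

lemma ex_total_orthonormal_set: "\<exists>M :: ('n::finite) wf set. orthonormal_set M \<and> total_set M"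
proof -
  have "\<exists>M\<in>{M. orthonormal_set M}. \<forall>X\<in>{M. orthonormal_set M}. M \<subseteq> X \<longrightarrow> X = (M :: 'n wf set)"
  proof (rule subset_Zorn')
    fix C :: "'n wf set set"
    assume C: "subset.chain {M. orthonormal_set M} C"
    show "\<Union>C \<in> {M. orthonormal_set M}"
      unfolding mem_Collect_eq orthonormal_set_def
    proof (intro conjI ballI impI)
      show "\<Union>C \<subseteq> L2" "\<And>e. e \<in> \<Union>C \<Longrightarrow> ip e e = 1"
        using C by (auto simp: subset.chain_def orthonormal_set_def)
      fix e e'
      assume "e \<in> \<Union>C" "e' \<in> \<Union>C" "e \<noteq> e'"
      then obtain X Y where XY: "X \<in> C" "Y \<in> C" "e \<in> X" "e' \<in> Y"
        by blast
      then have "X \<subseteq> Y \<or> Y \<subseteq> X"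
        using C by (auto simp: subset.chain_def)
      then obtain Z where "Z \<in> C" "e \<in> Z" "e' \<in> Z"
        using XY by blast
      moreover have "orthonormal_set Z"
        using C \<open>Z \<in> C\<close> by (auto simp: subset.chain_def)
      ultimately show "ip e e' = 0"
        using \<open>e \<noteq> e'\<close> by (simp add: orthonormal_set_ip)
    qed
  qed
  then show ?thesis
    using maximal_orthonormal_set_total by blast
qed

lemma ex_onb_seq: "\<exists>e :: nat \<Rightarrow> ('n::finite) wf. onb_seq e"
proof -
  obtain M :: "'n wf set" where M: "orthonormal_set M" "total_set M"
    using ex_total_orthonormal_set by blast
  define e where "e = from_nat_into M"
  have bij: "bij_betw e UNIV M"
    unfolding e_def
    by (rule bij_betw_from_nat_into[OF countable_orthonormal_set infinite_total_orthonormal_set])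
      (use M in auto)
  then have e: "e k \<in> M" "inj e" "M = range e" for k
    by (auto simp: bij_betw_def)
  have "ip (e j) (e k) = (if j = k then 1 else 0)" for j k
    using orthonormal_set_ip[OF M(1)] e by (simp add: inj_eq)
  then show ?thesis
    using M e unfolding onb_seq_def total_set_def ae_eq_def
    by (auto intro!: exI[of _ e] orthonormal_set_L2)
qed

subsection \<open>Trace against displacements\<close>

lemma
  fixes h :: "real^'n::finite \<Rightarrow> 'b::{banach, second_countable_topology}"
  assumes h: "h \<in> borel_measurable lborel"
  shows lborel_integral_translate: "(LINT x|lborel. h (x + a)) = (LINT x|lborel. h x)"
    and lborel_integrable_translate: "integrable lborel (\<lambda>x. h (x + a)) \<longleftrightarrow> integrable lborel h"
proof -
  have hb: "h \<in> borel_measurable borel" and m: "(+) a \<in> measurable lborel borel"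
    using h by simp_all
  have "(LINT x|lborel. h x) = integral\<^sup>L (distr lborel borel ((+) a)) h"
    by (simp add: lborel_distr_plus)
  also have "\<dots> = (LINT x|lborel. h (a + x))"
    by (rule integral_distr[OF m hb])
  finally show "(LINT x|lborel. h (x + a)) = (LINT x|lborel. h x)"
    by (simp add: add.commute)
  have "integrable lborel h \<longleftrightarrow> integrable (distr lborel borel ((+) a)) h"
    by (simp add: lborel_distr_plus)
  also have "\<dots> \<longleftrightarrow> integrable lborel (\<lambda>x. h (a + x))"
    by (rule integrable_distr_eq[OF m hb])
  finally show "integrable lborel (\<lambda>x. h (x + a)) \<longleftrightarrow> integrable lborel h"
    by (simp add: add.commute)
qed

lemma disp_apply:
  "disp \<xi> \<psi> x = exp (- \<i> * complex_of_real (inner (\<chi> j. \<xi> $ Inl j) (\<chi> j. \<xi> $ Inr j) / 2))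
     * exp (- \<i> * complex_of_real (inner (\<chi> j. \<xi> $ Inr j) x)) * \<psi> (x + (\<chi> j. \<xi> $ Inl j))"
  unfolding disp_def Let_def by simp

lemma disp_L2:
  assumes \<psi>: "\<psi> \<in> L2"
  shows "disp \<xi> \<psi> \<in> L2"
proof (rule L2I)
  define a :: "real^'a" where "a = (\<chi> j. \<xi> $ Inl j)"
  have [measurable]: "\<psi> \<in> borel_measurable lborel"
    using \<psi> by (rule L2_measurable)
  have "(\<lambda>x. \<psi> (x + a)) \<in> borel_measurable lborel"
    by measurable
  then show "disp \<xi> \<psi> \<in> borel_measurable lborel"
    unfolding disp_apply[abs_def] a_def[symmetric]
    by (intro borel_measurable_times borel_measurable_continuous_on[where f=exp]
        borel_measurable_continuous_on[where f="\<lambda>x. exp (- \<i> * complex_of_real (inner (\<chi> j. \<xi> $ Inr j) x))"])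
      (auto intro!: continuous_intros)
  have "integrable lborel (\<lambda>x. (cmod (\<psi> (x + a)))\<^sup>2)"
    using lborel_integrable_translate[of "\<lambda>x. (cmod (\<psi> x))\<^sup>2" a] \<psi>
    by (simp add: L2_integrable_square)
  then show "integrable lborel (\<lambda>x. (cmod (disp \<xi> \<psi> x))\<^sup>2)"
    by (simp add: disp_apply a_def norm_mult)
qed

lemma ip_disp:
  assumes \<phi>: "\<phi> \<in> L2" and \<psi>: "\<psi> \<in> L2"
  shows "ip (disp \<xi> \<phi>) (disp \<xi> \<psi>) = ip \<phi> \<psi>"
proof -
  define a :: "real^'a" where "a = (\<chi> j. \<xi> $ Inl j)"
  define b :: "real^'a" where "b = (\<chi> j. \<xi> $ Inr j)"
  have [measurable]: "\<phi> \<in> borel_measurable lborel"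
    by (rule L2_measurable[OF \<phi>])
  have [measurable]: "\<psi> \<in> borel_measurable lborel"
    by (rule L2_measurable[OF \<psi>])
  have unimodular: "cnj (exp (- \<i> * complex_of_real t)) * exp (- \<i> * complex_of_real t) = 1" for t
  proof -
    have "cnj z * z = of_real ((cmod z)\<^sup>2)" for z
      by (subst complex_norm_square) (simp add: mult.commute)
    then show ?thesis
      by simp
  qed
  have "cnj (disp \<xi> \<phi> x) * disp \<xi> \<psi> x = cnj (\<phi> (x + a)) * \<psi> (x + a)" for x
  proof -
    have "cnj (disp \<xi> \<phi> x) * disp \<xi> \<psi> x =
      (cnj (exp (- \<i> * complex_of_real (inner a b / 2))) * exp (- \<i> * complex_of_real (inner a b / 2)))
      * (cnj (exp (- \<i> * complex_of_real (inner b x))) * exp (- \<i> * complex_of_real (inner b x)))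
      * (cnj (\<phi> (x + a)) * \<psi> (x + a))"
      unfolding disp_apply a_def[symmetric] b_def[symmetric] by (simp only: complex_cnj_mult mult_ac)
    then show ?thesis
      by (simp only: unimodular) simp
  qed
  then have "ip (disp \<xi> \<phi>) (disp \<xi> \<psi>) = (LINT x|lborel. cnj (\<phi> (x + a)) * \<psi> (x + a))"
    unfolding ip_def by simp
  also have "\<dots> = ip \<phi> \<psi>"
    unfolding ip_def by (rule lborel_integral_translate) measurable
  finally show ?thesis .
qed

lemma sum_ip_le_tnorm:
  fixes e g :: "nat \<Rightarrow> ('n::finite) wf"
  assumes "\<And>k. e k \<in> L2" "\<And>k. g k \<in> L2"
    and "\<And>j k. ip (e j) (e k) = (if j = k then 1 else 0)"
    and "\<And>j k. ip (g j) (g k) = (if j = k then 1 else 0)"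
  shows "ennreal (\<Sum>i<N. cmod (ip (e i) (T (g i)))) \<le> tnorm T"
proof -
  have "(map g [0..<N], map e [0..<N])
      \<in> {(es, fs). orthonormal_list es \<and> orthonormal_list fs \<and> length es = length fs}"
    using assms by (auto simp: orthonormal_list_def)
  from SUP_upper[OF this, of "\<lambda>p. ennreal (\<Sum>i<length (fst p). cmod (ip (snd p ! i) (T (fst p ! i))))"]
  show ?thesis
    by (simp add: tnorm_def)
qed

definition basis_seq :: "nat \<Rightarrow> ('n::finite) wf" where
  "basis_seq = (SOME e. onb_seq e)"

lemma basis_seq_L2: "basis_seq k \<in> L2"
  and ip_basis_seq: "ip (basis_seq j) (basis_seq k) = (if j = k then 1 else 0)"
  using someI_ex[OF ex_onb_seq] unfolding basis_seq_def onb_seq_def by blast+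

lemma trace_eq_suminf: "trace T = (\<Sum>k. ip (basis_seq k) (T (basis_seq k)))"
  by (simp add: trace_def basis_seq_def Let_def)

lemma ennreal_le_imp_le_enn2real: "ennreal x \<le> t \<Longrightarrow> t \<noteq> \<infinity> \<Longrightarrow> 0 \<le> x \<Longrightarrow> x \<le> enn2real t"
  using enn2real_mono[of "ennreal x" t] by (simp add: less_top)

lemma trace_disp_series_le_tnorm:
  fixes \<xi> :: "real^('n::finite + 'n)"
  assumes T: "tnorm T \<noteq> \<infinity>"
  defines "c \<equiv> \<lambda>k. ip (basis_seq k) (T (disp \<xi> (basis_seq k)))"
  shows "summable c" and "ennreal (cmod (\<Sum>k. c k)) \<le> tnorm T"
proof -
  have partial: "(\<Sum>i<n. norm (c i)) \<le> enn2real (tnorm T)" for n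
  proof -
    have "ennreal (\<Sum>i<n. cmod (c i)) \<le> tnorm T"
      unfolding c_def
      by (rule sum_ip_le_tnorm[OF basis_seq_L2 disp_L2[OF basis_seq_L2] ip_basis_seq])
        (simp add: ip_disp basis_seq_L2 ip_basis_seq)
    then show ?thesis
      using T by (rule ennreal_le_imp_le_enn2real) (simp add: sum_nonneg)
  qed
  then have norm_c: "summable (\<lambda>k. norm (c k))"
    by (rule summableI_nonneg_bounded[OF norm_ge_zero])
  then have bound: "(\<Sum>k. norm (c k)) \<le> enn2real (tnorm T)"
    using partial by (rule suminf_le_const)
  show "summable c"
    using norm_c by (rule summable_norm_cancel)
  have "cmod (\<Sum>k. c k) \<le> enn2real (tnorm T)"
    using summable_norm[OF norm_c] bound by linarith
  then have "ennreal (cmod (\<Sum>k. c k)) \<le> ennreal (enn2real (tnorm T))"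
    by (rule ennreal_leI)
  also have "\<dots> = tnorm T"
    using T by (simp add: ennreal_enn2real_if)
  finally show "ennreal (cmod (\<Sum>k. c k)) \<le> tnorm T" .
qed

lemma trace_class_L2: "trace_class A \<Longrightarrow> \<psi> \<in> L2 \<Longrightarrow> A \<psi> \<in> L2"
  unfolding trace_class_def lin_op_def by blast

lemma norm_trace_disp_diff_le_tnorm:
  assumes A: "trace_class A" and B: "trace_class B"
  shows "ennreal (cmod (trace (\<lambda>\<psi>. A (disp \<xi> \<psi>)) - trace (\<lambda>\<psi>. B (disp \<xi> \<psi>))))
     \<le> tnorm (\<lambda>\<psi> x. A \<psi> x - B \<psi> x)"
proof (cases "tnorm (\<lambda>\<psi> x. A \<psi> x - B \<psi> x) = \<infinity>")
  case False
  let ?c = "\<lambda>T k. ip (basis_seq k) (T (disp \<xi> (basis_seq k)))"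
  have "summable (?c A)" "summable (?c B)"
    using trace_disp_series_le_tnorm(1)[where T=A] trace_disp_series_le_tnorm(1)[where T=B] A B
    by (simp_all add: trace_class_def less_top)
  then have "trace (\<lambda>\<psi>. A (disp \<xi> \<psi>)) - trace (\<lambda>\<psi>. B (disp \<xi> \<psi>)) = (\<Sum>k. ?c A k - ?c B k)"
    unfolding trace_eq_suminf by (rule suminf_diff)
  also have "(\<lambda>k. ?c A k - ?c B k) = ?c (\<lambda>\<psi> x. A \<psi> x - B \<psi> x)"
  proof
    fix k
    have "disp \<xi> (basis_seq k) \<in> L2"
      by (rule disp_L2[OF basis_seq_L2])
    then show "?c A k - ?c B k = ?c (\<lambda>\<psi> x. A \<psi> x - B \<psi> x) k"
      using ip_diff_right[OF basis_seq_L2 trace_class_L2[OF A] trace_class_L2[OF B]] by simp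
  qed
  finally show ?thesis
    using trace_disp_series_le_tnorm(2)[OF False] by simp
qed simp

lemma continuous_on_matrix_vector_mult[continuous_intros]:
  fixes A :: "real^'n::finite^'m::finite"
  shows "continuous_on S f \<Longrightarrow> continuous_on S (\<lambda>x. A *v f x)"
  by (rule bounded_linear.continuous_on[OF matrix_vector_mul_bounded_linear])

lemma tendsto_matrix_vector_mult_left:
  fixes A :: "'b \<Rightarrow> real^'n::finite^'m::finite"
  assumes "(A \<longlongrightarrow> A0) F"
  shows "((\<lambda>x. A x *v y) \<longlongrightarrow> A0 *v y) F"
proof (rule vec_tendstoI)
  fix i
  show "((\<lambda>x. (A x *v y) $ i) \<longlongrightarrow> (A0 *v y) $ i) F"
    unfolding matrix_vector_mult_def using assms by (simp; intro tendsto_intros)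
qed

lemma symmetric_polarization:
  fixes V :: "real^'m::finite^'m"
  assumes "transpose V = V"
  shows "inner (u + w) (V *v (u + w)) - inner (u - w) (V *v (u - w)) = 4 * inner u (V *v w)"
proof -
  have "inner w (V *v u) = inner u (V *v w)"
    using vector_transpose_matrix[of w V] assms
    by (simp add: dot_lmul_matrix[symmetric] inner_commute)
  then show ?thesis
    by (simp add: matrix_vector_right_distrib matrix_vector_mult_diff_distrib inner_add_left
        inner_add_right inner_diff_left inner_diff_right)
qed

lemma symmetric_psd_entry_bound:
  fixes V :: "real^'m::finite^'m"
  assumes sym: "transpose V = V" and psd: "\<And>\<eta>. 0 \<le> inner \<eta> (V *v \<eta>)"
    and \<delta>: "0 < \<delta>" and small: "\<And>\<eta>. norm \<eta> < \<delta> \<Longrightarrow> inner \<eta> (V *v \<eta>) < c"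
  shows "\<bar>V $ j $ l\<bar> \<le> 4 * c / \<delta>\<^sup>2"
proof -
  define t where "t = \<delta> / 4"
  define u where "u = t *\<^sub>R axis j (1::real)"
  define w where "w = t *\<^sub>R axis l (1::real)"
  have "norm u = t" "norm w = t" "0 < t"
    using \<delta> by (simp_all add: u_def w_def t_def)
  then have "norm (u + w) < \<delta>" "norm (u - w) < \<delta>"
    using norm_triangle_ineq[of u w] norm_triangle_ineq4[of u w] by (simp_all add: t_def)
  then have "inner (u + w) (V *v (u + w)) < c" "inner (u - w) (V *v (u - w)) < c"
    by (simp_all add: small)
  then have "\<bar>inner u (V *v w)\<bar> < c / 4"
    unfolding abs_less_iff
    using symmetric_polarization[OF sym, of u w] psd[of "u + w"] psd[of "u - w"] by linarith
  moreover have "inner u (V *v w) = t\<^sup>2 * V $ j $ l"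
    by (simp add: u_def w_def matrix_vector_mult_scaleR matrix_vector_mult_basis inner_axis'
        column_def power2_eq_square)
  ultimately show ?thesis
    using \<open>0 < t\<close> by (simp add: abs_mult t_def field_simps)
qed

lemma norm_matrix_le_sum_abs:
  "norm (V :: real^'n::finite^'m::finite) \<le> (\<Sum>j\<in>UNIV. \<Sum>l\<in>UNIV. \<bar>V $ j $ l\<bar>)"
proof -
  have "norm V \<le> (\<Sum>j\<in>UNIV. norm (V $ j))"
    unfolding norm_vec_def by (rule L2_set_le_sum) simp
  also have "\<dots> \<le> (\<Sum>j\<in>UNIV. \<Sum>l\<in>UNIV. \<bar>V $ j $ l\<bar>)"
    by (intro sum_mono norm_le_l1_cart)
  finally show ?thesis .
qed

lemma sum_UNIV_Plus:
  "(\<Sum>i\<in>(UNIV :: ('a::finite + 'b::finite) set). g i) = (\<Sum>a\<in>UNIV. g (Inl a)) + (\<Sum>b\<in>UNIV. g (Inr b))"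
  using sum.Plus[of "UNIV :: 'a set" "UNIV :: 'b set" g] by (simp add: o_def)

lemma Omega_mult_Inl: "(Omega *v x) $ Inl a = x $ Inr a"
  and Omega_mult_Inr: "(Omega *v x) $ Inr a = - x $ Inl a"
  by (simp_all add: matrix_vector_mult_def Omega_def sum_UNIV_Plus if_distrib[of "\<lambda>c. c * _"]
      sum.delta cong: if_cong)

definition OmegaT :: "real^('n::finite + 'n) \<Rightarrow> real^('n + 'n)" where
  "OmegaT x = (\<chi> i. case i of Inl a \<Rightarrow> - x $ Inr a | Inr a \<Rightarrow> x $ Inl a)"

lemma Omega_OmegaT: "Omega *v OmegaT x = x"
  unfolding vec_eq_iff
proof
  fix i
  show "(Omega *v OmegaT x) $ i = x $ i"
    by (cases i) (simp_all add: Omega_mult_Inl Omega_mult_Inr OmegaT_def)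
qed

lemma norm_OmegaT: "norm (OmegaT x) = norm x"
proof -
  have "inner (OmegaT x) (OmegaT x) = inner x x"
    unfolding inner_vec_def by (simp add: sum_UNIV_Plus OmegaT_def add.commute)
  then show ?thesis
    by (simp add: norm_eq_sqrt_inner)
qed

lemma QCM_symmetric: "V \<in> QCM \<Longrightarrow> transpose V = V"
  by (simp add: QCM_def)

lemma QCM_quadratic_nonneg:
  assumes "V \<in> QCM"
  shows "0 \<le> inner z (V *v z)"
proof -
  define w :: "complex^('a + 'a)" where "w = (\<chi> j. complex_of_real (z $ j))"
  have "0 \<le> Re (\<Sum>j\<in>UNIV. \<Sum>k\<in>UNIV.
         cnj (w $ j) * (complex_of_real (V $ j $ k) - \<i> * complex_of_real (Omega $ j $ k)) * w $ k)"
    using assms unfolding QCM_def by blast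
  also have "\<dots> = inner z (V *v z)"
    by (simp add: w_def Re_sum inner_vec_def matrix_vector_mult_def sum_distrib_left mult_ac)
  finally show ?thesis .
qed

lemma closed_QCM: "closed (QCM :: (real^('n::finite + 'n)^('n + 'n)) set)"
proof -
  have "QCM = {V :: real^('n + 'n)^('n + 'n). transpose V = V} \<inter>
      (\<Inter>z :: complex^('n + 'n). {V. 0 \<le> Re (\<Sum>j\<in>UNIV. \<Sum>k\<in>UNIV.
         cnj (z $ j) * (complex_of_real (V $ j $ k) - \<i> * complex_of_real (Omega $ j $ k)) * z $ k)})"
    by (auto simp: QCM_def)
  also have "closed \<dots>"
    unfolding transpose_def
    by (intro closed_Int closed_INT ballI closed_Collect_eq closed_Collect_le continuous_intros)
  finally show ?thesis .
qed

subsection \<open>Gaussian characteristic functions\<close>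

definition gaussian_char ::
    "real^('n::finite + 'n)^('n + 'n) \<Rightarrow> real^('n + 'n) \<Rightarrow> real^('n + 'n) \<Rightarrow> complex" where
  "gaussian_char V s \<xi> = exp (complex_of_real (- (1/4) * inner (Omega *v \<xi>) (V *v (Omega *v \<xi>)))
     + \<i> * complex_of_real (inner s (Omega *v \<xi>)))"

lemma is_gaussian_iff:
  "is_gaussian V s \<rho> \<longleftrightarrow> trace_class \<rho> \<and> (\<forall>\<xi>. trace (\<lambda>\<psi>. \<rho> (disp \<xi> \<psi>)) = gaussian_char V s \<xi>)"
  by (simp add: is_gaussian_def gaussian_char_def)

lemma gaussian_char_0: "gaussian_char V s 0 = 1"
  by (simp add: gaussian_char_def)

lemma norm_gaussian_char:
  "cmod (gaussian_char V s \<xi>) = exp (- (1/4) * inner (Omega *v \<xi>) (V *v (Omega *v \<xi>)))"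
  by (simp add: gaussian_char_def)

lemma continuous_on_gaussian_char: "continuous_on S (gaussian_char V s)"
  unfolding gaussian_char_def by (intro continuous_intros)

lemma tendsto_gaussian_char:
  "(V \<longlongrightarrow> V0) F \<Longrightarrow> (s \<longlongrightarrow> s0) F \<Longrightarrow>
    ((\<lambda>x. gaussian_char (V x) (s x) \<xi>) \<longlongrightarrow> gaussian_char V0 s0 \<xi>) F"
  unfolding gaussian_char_def by (intro tendsto_intros tendsto_matrix_vector_mult_left)

lemma gaussian_char_near_one_quadratic_bound:
  assumes "cmod (gaussian_char V s \<xi> - 1) < 1/2"
  shows "inner (Omega *v \<xi>) (V *v (Omega *v \<xi>)) < 4"
proof (rule ccontr)
  assume "\<not> ?thesis"
  then have "exp (- (1/4) * inner (Omega *v \<xi>) (V *v (Omega *v \<xi>))) \<le> exp (-1)"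
    by simp
  also have "\<dots> \<le> 1/2"
    using exp_ge_add_one_self[of "1::real"] by (simp add: exp_minus field_simps)
  finally have "cmod (gaussian_char V s \<xi>) \<le> 1/2"
    by (simp add: norm_gaussian_char)
  moreover have "1 \<le> cmod (gaussian_char V s \<xi>) + cmod (gaussian_char V s \<xi> - 1)"
    using norm_triangle_ineq4[of "gaussian_char V s \<xi>" "gaussian_char V s \<xi> - 1"] by simp
  ultimately show False
    using assms by linarith
qed

lemma gaussian_char_phase_pi:
  assumes "inner s (Omega *v \<xi>) = pi"
  shows "1 \<le> cmod (gaussian_char V s \<xi> - 1)"
proof -
  define r where "r = exp (- (1/4) * inner (Omega *v \<xi>) (V *v (Omega *v \<xi>)))"
  have "gaussian_char V s \<xi> = exp (complex_of_real (- (1/4) * inner (Omega *v \<xi>) (V *v (Omega *v \<xi>))))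
      * exp (\<i> * complex_of_real pi)"
    unfolding gaussian_char_def assms by (simp only: exp_add)
  also have "\<dots> = - complex_of_real r"
    unfolding r_def exp_of_real exp_pi_i' by simp
  finally have "gaussian_char V s \<xi> - 1 = - complex_of_real (r + 1)"
    by simp
  moreover have "0 < r"
    by (simp add: r_def)
  ultimately show ?thesis
    by (simp only: norm_minus_cancel norm_of_real)
qed

text \<open>If s were large, the phase of the characteristic function would reach \<pi> inside the ball.\<close>

lemma gaussian_params_bounds:
  assumes V: "V \<in> QCM" and \<delta>: "0 < \<delta>"
    and near: "\<And>\<xi>. norm \<xi> < \<delta> \<Longrightarrow> cmod (gaussian_char V s \<xi> - 1) < 1/2"
  shows "\<bar>V $ j $ l\<bar> \<le> 16 / \<delta>\<^sup>2" and "norm s \<le> pi / \<delta>"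
proof -
  have "inner \<eta> (V *v \<eta>) < 4" if "norm \<eta> < \<delta>" for \<eta>
    using gaussian_char_near_one_quadratic_bound[OF near, of "OmegaT \<eta>"] that
    by (simp add: norm_OmegaT Omega_OmegaT)
  from symmetric_psd_entry_bound[OF QCM_symmetric[OF V] QCM_quadratic_nonneg[OF V] \<delta> this]
  show "\<bar>V $ j $ l\<bar> \<le> 16 / \<delta>\<^sup>2"
    by simp
  show "norm s \<le> pi / \<delta>"
  proof (rule ccontr)
    assume "\<not> norm s \<le> pi / \<delta>"
    then have big: "pi < \<delta> * norm s"
      using \<delta> by (simp add: pos_le_divide_eq mult.commute)
    then have s: "0 < norm s"
      using \<delta> pi_gt_zero by (smt (verit) mult_nonneg_nonpos norm_ge_zero)
    define \<xi> where "\<xi> = OmegaT ((pi / (norm s)\<^sup>2) *\<^sub>R s)"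
    have "inner s (Omega *v \<xi>) = pi"
      using s by (simp add: \<xi>_def Omega_OmegaT power2_norm_eq_inner[symmetric])
    then have "1 \<le> cmod (gaussian_char V s \<xi> - 1)"
      by (rule gaussian_char_phase_pi)
    moreover have "norm \<xi> = pi / norm s"
      using s by (simp add: \<xi>_def norm_OmegaT power2_eq_square)
    then have "norm \<xi> < \<delta>"
      using big s by (simp add: pos_divide_less_eq)
    ultimately show False
      using near by fastforce
  qed
qed

lemma bounded_gaussian_params_near_one:
  assumes "0 < \<delta>"
  shows "bounded {(V, s). V \<in> QCM \<and> (\<forall>\<xi>. norm \<xi> < \<delta> \<longrightarrow> cmod (gaussian_char V s \<xi> - 1) < 1/2)}"
proof (rule boundedI)
  fix p :: "(real^('a + 'a)^('a + 'a)) \<times> (real^('a + 'a))"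
  assume "p \<in> {(V, s). V \<in> QCM \<and> (\<forall>\<xi>. norm \<xi> < \<delta> \<longrightarrow> cmod (gaussian_char V s \<xi> - 1) < 1/2)}"
  then obtain V s where p: "p = (V, s)" and bounds: "\<bar>V $ j $ l\<bar> \<le> 16 / \<delta>\<^sup>2" "norm s \<le> pi / \<delta>" for j l
    using gaussian_params_bounds[OF _ assms] by blast
  have "norm V \<le> (\<Sum>j\<in>(UNIV :: ('a + 'a) set). \<Sum>l\<in>(UNIV :: ('a + 'a) set). 16 / \<delta>\<^sup>2)"
    using norm_matrix_le_sum_abs[of V] sum_mono[OF sum_mono[OF bounds(1)]] by (rule order_trans)
  then show "norm p \<le> (\<Sum>j\<in>(UNIV :: ('a + 'a) set). \<Sum>l\<in>(UNIV :: ('a + 'a) set). 16 / \<delta>\<^sup>2) + pi / \<delta>"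
    unfolding p using norm_Pair_le[of V s] bounds(2) by linarith
qed

subsection \<open>Passing to the limit\<close>

lemma uniform_limit_equicontinuous_at:
  fixes f :: "nat \<Rightarrow> 'a::metric_space \<Rightarrow> 'b::metric_space"
  assumes lim: "uniform_limit UNIV f g sequentially"
    and cont: "\<And>n. continuous_on UNIV (f n)" and e: "0 < e"
  shows "\<exists>\<delta>>0. \<forall>\<^sub>F n in sequentially. \<forall>x. dist x a < \<delta> \<longrightarrow> dist (f n x) (f n a) < e"
proof -
  have "continuous_on UNIV g"
    using cont lim by (intro uniform_limit_theorem) auto
  then obtain \<delta> where \<delta>: "0 < \<delta>" "\<And>x. dist x a < \<delta> \<Longrightarrow> dist (g x) (g a) < e / 3"
    using e unfolding continuous_on_iff by (metis UNIV_I divide_pos_pos zero_less_numeral)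
  have "0 < e / 3"
    using e by simp
  then have "\<forall>\<^sub>F n in sequentially. \<forall>x\<in>UNIV. dist (f n x) (g x) < e / 3"
    using lim unfolding uniform_limit_iff by blast
  then have "\<forall>\<^sub>F n in sequentially. \<forall>x. dist x a < \<delta> \<longrightarrow> dist (f n x) (f n a) < e"
    by (rule eventually_mono) (metis UNIV_I \<delta>(2) dist_commute dist_triangle_third)
  then show ?thesis
    using \<delta>(1) by blast
qed

lemma eventually_bounded_imp_convergent_subseq:
  fixes X :: "nat \<Rightarrow> 'a::heine_borel"
  assumes S: "bounded S" and X: "\<forall>\<^sub>F n in sequentially. X n \<in> S"
  obtains l q where "strict_mono q" "(X \<circ> q) \<longlonglongrightarrow> l"
proof -
  obtain K where "\<And>n. K \<le> n \<Longrightarrow> X n \<in> S"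
    using X unfolding eventually_sequentially by blast
  then have "bounded (range (\<lambda>n. X (n + K)))"
    by (intro bounded_subset[OF S]) auto
  then obtain l r where r: "strict_mono r" and lim: "((\<lambda>n. X (n + K)) \<circ> r) \<longlonglongrightarrow> l"
    using bounded_imp_convergent_subsequence by blast
  have "strict_mono (\<lambda>n. r n + K)"
    using r by (simp add: strict_mono_def)
  moreover have "(X \<circ> (\<lambda>n. r n + K)) \<longlonglongrightarrow> l"
    using lim by (simp add: o_def)
  ultimately show ?thesis
    by (rule that)
qed

lemma uniform_limit_gaussian_char:
  assumes "\<And>k. is_gaussian (V k) (s k) (\<rho>s k)" and \<rho>: "trace_class \<rho>"
    and "(\<lambda>k. tnorm (\<lambda>\<psi> x. \<rho>s k \<psi> x - \<rho> \<psi> x)) \<longlonglongrightarrow> 0"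
  shows "uniform_limit UNIV (\<lambda>k. gaussian_char (V k) (s k)) (\<lambda>\<xi>. trace (\<lambda>\<psi>. \<rho> (disp \<xi> \<psi>))) sequentially"
  unfolding uniform_limit_iff
proof (intro allI impI)
  fix e :: real
  assume "0 < e"
  then have "\<forall>\<^sub>F k in sequentially. tnorm (\<lambda>\<psi> x. \<rho>s k \<psi> x - \<rho> \<psi> x) < ennreal e"
    using order_tendstoD(2)[OF assms(3)] by simp
  then show "\<forall>\<^sub>F k in sequentially. \<forall>\<xi>\<in>UNIV.
      dist (gaussian_char (V k) (s k) \<xi>) (trace (\<lambda>\<psi>. \<rho> (disp \<xi> \<psi>))) < e"
  proof (rule eventually_mono, intro ballI)
    fix k \<xi>
    assume close: "tnorm (\<lambda>\<psi> x. \<rho>s k \<psi> x - \<rho> \<psi> x) < ennreal e"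
    have "trace_class (\<rho>s k)" "trace (\<lambda>\<psi>. \<rho>s k (disp \<xi> \<psi>)) = gaussian_char (V k) (s k) \<xi>"
      using assms(1)[of k] by (simp_all add: is_gaussian_iff)
    then have "ennreal (cmod (gaussian_char (V k) (s k) \<xi> - trace (\<lambda>\<psi>. \<rho> (disp \<xi> \<psi>)))) < ennreal e"
      using norm_trace_disp_diff_le_tnorm[OF _ \<rho>, of "\<rho>s k" \<xi>] close by simp
    then show "dist (gaussian_char (V k) (s k) \<xi>) (trace (\<lambda>\<psi>. \<rho> (disp \<xi> \<psi>))) < e"
      by (simp add: dist_norm ennreal_less_iff)
  qed
qed

lemma is_gaussian_limit:
  assumes "trace_class \<rho>" and V: "V \<longlonglongrightarrow> V0" and s: "s \<longlonglongrightarrow> s0"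
    and char: "\<And>\<xi>. (\<lambda>n. gaussian_char (V n) (s n) \<xi>) \<longlonglongrightarrow> trace (\<lambda>\<psi>. \<rho> (disp \<xi> \<psi>))"
  shows "is_gaussian V0 s0 \<rho>"
proof -
  have "gaussian_char V0 s0 \<xi> = trace (\<lambda>\<psi>. \<rho> (disp \<xi> \<psi>))" for \<xi>
    using tendsto_gaussian_char[OF V s] char by (rule LIMSEQ_unique)
  then show ?thesis
    using assms(1) by (simp add: is_gaussian_iff)
qed

theorem lemmaA1:
  fixes V :: "nat \<Rightarrow> real^('n::finite + 'n)^('n + 'n)"
    and s :: "nat \<Rightarrow> real^('n + 'n)"
    and \<rho>s :: "nat \<Rightarrow> 'n op"
    and \<rho> :: "'n op"
  assumes "\<And>k. V k \<in> QCM"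
    and "\<And>k. is_gaussian (V k) (s k) (\<rho>s k)"
    and "trace_class \<rho>"
    and "(\<lambda>k. tnorm (\<lambda>\<psi> x. \<rho>s k \<psi> x - \<rho> \<psi> x)) \<longlonglongrightarrow> 0"
  shows "\<rho> \<in> Gaussian_states"
proof -
  have unif: "uniform_limit UNIV (\<lambda>k. gaussian_char (V k) (s k))
      (\<lambda>\<xi>. trace (\<lambda>\<psi>. \<rho> (disp \<xi> \<psi>))) sequentially"
    using assms(2-4) by (rule uniform_limit_gaussian_char)
  obtain \<delta> :: real where \<delta>: "0 < \<delta>" and near: "\<forall>\<^sub>F k in sequentially.
      \<forall>\<xi>. norm \<xi> < \<delta> \<longrightarrow> cmod (gaussian_char (V k) (s k) \<xi> - 1) < 1/2"
    using uniform_limit_equicontinuous_at[OF unif continuous_on_gaussian_char, of "1/2" 0]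
    by (auto simp: gaussian_char_0 dist_norm)
  have "\<forall>\<^sub>F k in sequentially. (V k, s k) \<in> {(V, s). V \<in> QCM \<and>
      (\<forall>\<xi>. norm \<xi> < \<delta> \<longrightarrow> cmod (gaussian_char V s \<xi> - 1) < 1/2)}"
    using near by (rule eventually_mono) (simp add: assms(1))
  then obtain L q where q: "strict_mono q" and lim: "((\<lambda>k. (V k, s k)) \<circ> q) \<longlonglongrightarrow> L"
    by (rule eventually_bounded_imp_convergent_subseq[OF bounded_gaussian_params_near_one[OF \<delta>]])
  have V_lim: "(\<lambda>n. V (q n)) \<longlonglongrightarrow> fst L" and s_lim: "(\<lambda>n. s (q n)) \<longlonglongrightarrow> snd L"
    using tendsto_fst[OF lim] tendsto_snd[OF lim] by (simp_all add: o_def)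
  have "fst L \<in> QCM"
    using closed_QCM assms(1) V_lim by (rule closed_sequentially)
  moreover have "is_gaussian (fst L) (snd L) \<rho>"
    using assms(3) V_lim s_lim
  proof (rule is_gaussian_limit)
    show "(\<lambda>n. gaussian_char (V (q n)) (s (q n)) \<xi>) \<longlonglongrightarrow> trace (\<lambda>\<psi>. \<rho> (disp \<xi> \<psi>))" for \<xi>
      using LIMSEQ_subseq_LIMSEQ[OF tendsto_uniform_limitI[OF unif UNIV_I] q] by (simp add: o_def)
  qed
  ultimately show ?thesis
    unfolding Gaussian_states_def by blast
qed

end
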